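(* Let $d_1,d_2,\alpha,\beta>0$ be fixed, let $u_c=\tfrac12$, and for $\mu>0$ define $$k_c^2=\sqrt{\frac{\mu\beta}{d_1d_2}},\quad \chi_c=\frac{\mu d_2+\beta d_1+2\sqrt{d_1d_2\mu\beta}}{\alpha u_c(1-u_c)},\quad M=\frac{\beta+k_c^2d_2}{\alpha},\quad M^*=\frac{\alpha}{\mu+d_1k_c^2},$$ $$G(\mu)=\frac14\chi_cM^2k_c^2-4\mu M^3+\frac{2\mu^2M^3(\beta+4k_c^2d_2)}{\alpha\chi_ck_c^2-(\mu+4k_c^2d_1)(\beta+4k_c^2d_2)},\qquad L(\mu)=\frac{G(\mu)\,M^*}{1+MM^*}.$$ Then the cubic Stuart–Landau amplitude equation $\frac{dA}{dT_2}=\sigma A-L(\mu)A^3$ (with $\sigma>0$) is supercritical, i.e. $L(\mu)>0$, for all sufficiently small $\mu>0$, and subcritical, i.e. $L(\mu)<0$, for all sufficiently large $\mu$.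
   Context: This concerns the volume-filling chemotaxis system $u_t=(d_1u_x-\chi u(1-u)v_x)_x+\mu u(1-u/u_c)$, $v_t=d_2v_{xx}+\alpha u-\beta v$ near the uniform steady state $(u_c,\alpha u_c/\beta)$, where $\chi_c$ is the critical chemotactic coefficient and $k_c$ the critical wavenumber. In the weakly nonlinear expansion $\chi=\chi_c+\varepsilon^2\chi_2+\dots$, the amplitude $A$ of the leading-order pattern $\varepsilon A\,(M,1)^T\cos(k_cx)$ obeys $\frac{dA}{dT_2}=\sigma A-LA^3$ with $\sigma=\frac{k_c^2\chi_2u_c(1-u_c)M^*}{1+MM^*}>0$ and, for $u_c=\tfrac12$, the Landau coefficient $L$ given by the displayed formula. The equation is called supercritical if $L>0$ and subcritical if $L<0$. *)

theory Defs
  imports "HOL-Analysis.Analysis"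
begin

definition uc :: real where "uc = 1/2"

definition kc2 :: "real \<Rightarrow> real \<Rightarrow> real \<Rightarrow> real \<Rightarrow> real \<Rightarrow> real" where
  "kc2 d1 d2 \<alpha> \<beta> \<mu> = sqrt (\<mu> * \<beta> / (d1 * d2))"

definition chic :: "real \<Rightarrow> real \<Rightarrow> real \<Rightarrow> real \<Rightarrow> real \<Rightarrow> real" where
  "chic d1 d2 \<alpha> \<beta> \<mu> =
     (\<mu> * d2 + \<beta> * d1 + 2 * sqrt (d1 * d2 * \<mu> * \<beta>)) / (\<alpha> * uc * (1 - uc))"

definition Mc :: "real \<Rightarrow> real \<Rightarrow> real \<Rightarrow> real \<Rightarrow> real \<Rightarrow> real" where
  "Mc d1 d2 \<alpha> \<beta> \<mu> = (\<beta> + kc2 d1 d2 \<alpha> \<beta> \<mu> * d2) / \<alpha>"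

definition Mstar :: "real \<Rightarrow> real \<Rightarrow> real \<Rightarrow> real \<Rightarrow> real \<Rightarrow> real" where
  "Mstar d1 d2 \<alpha> \<beta> \<mu> = \<alpha> / (\<mu> + d1 * kc2 d1 d2 \<alpha> \<beta> \<mu>)"

definition Gfun :: "real \<Rightarrow> real \<Rightarrow> real \<Rightarrow> real \<Rightarrow> real \<Rightarrow> real" where
  "Gfun d1 d2 \<alpha> \<beta> \<mu> =
    (let k2 = kc2 d1 d2 \<alpha> \<beta> \<mu>; chi = chic d1 d2 \<alpha> \<beta> \<mu>; M = Mc d1 d2 \<alpha> \<beta> \<mu> in
      1/4 * chi * M^2 * k2 - 4 * \<mu> * M^3
      + 2 * \<mu>^2 * M^3 * (\<beta> + 4 * k2 * d2)
        / (\<alpha> * chi * k2 - (\<mu> + 4 * k2 * d1) * (\<beta> + 4 * k2 * d2)))"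

definition Lfun :: "real \<Rightarrow> real \<Rightarrow> real \<Rightarrow> real \<Rightarrow> real \<Rightarrow> real" where
  "Lfun d1 d2 \<alpha> \<beta> \<mu> =
    Gfun d1 d2 \<alpha> \<beta> \<mu> * Mstar d1 d2 \<alpha> \<beta> \<mu>
      / (1 + Mc d1 d2 \<alpha> \<beta> \<mu> * Mstar d1 d2 \<alpha> \<beta> \<mu>)"

definition supercritical :: "real \<Rightarrow> bool" where "supercritical L \<longleftrightarrow> L > 0"
definition subcritical :: "real \<Rightarrow> bool" where "subcritical L \<longleftrightarrow> L < 0"

end

theory Submission
  imports Defs
begin

text \<open>Write \<open>a = \<surd>(\<mu> d2)\<close> and \<open>b = \<surd>(\<beta> d1)\<close>. Then \<open>k_c\<^sup>2 = ab/(d1 d2)\<close>,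
  \<open>\<chi>_c = 4(a+b)\<^sup>2/\<alpha>\<close> and the denominator of the last term of \<open>G\<close> collapses to
  \<open>-9a\<^sup>2b\<^sup>2/(d1 d2)\<close>, so \<open>L\<close> is a positive multiple of the quadratic form
  \<open>9b\<^sup>2 - 29ab - 8a\<^sup>2\<close>. Its sign depends only on \<open>a/b\<close>, which tends to \<open>0\<close> as
  \<open>\<mu> \<rightarrow> 0\<close> and to \<open>\<infinity>\<close> as \<open>\<mu> \<rightarrow> \<infinity>\<close>.\<close>

lemma quadratic_pos_if_small_ratio:
  fixes a b :: real
  assumes "a \<ge> 0" and "b \<ge> 0" and "16 * a\<^sup>2 < b\<^sup>2"
  shows "9 * b\<^sup>2 - 29 * a * b - 8 * a\<^sup>2 > 0"
proof -
  have "(4 * a)\<^sup>2 < b\<^sup>2" using assms(3) by (simp add: power_mult_distrib)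
  then have "4 * a < b" using assms(2) by (rule power_less_imp_less_base)
  then have "a * b \<le> b * b / 4" using assms(2) mult_right_mono[of "4 * a" b b] by simp
  then show ?thesis using assms(3) zero_le_square[of b] unfolding power2_eq_square mult.assoc by linarith
qed

lemma quadratic_neg_if_large_ratio:
  fixes a b :: real
  assumes "a \<ge> 0" and "b > 0" and "b\<^sup>2 \<le> a\<^sup>2"
  shows "9 * b\<^sup>2 - 29 * a * b - 8 * a\<^sup>2 < 0"
proof -
  have "b \<le> a" using power2_le_imp_le[OF assms(3,1)] .
  then have "b * b \<le> a * b" "0 < a * b" using assms mult_right_mono[of b a b] by auto
  then show ?thesis using zero_le_square[of a] unfolding power2_eq_square mult.assoc by linarith
qed

lemma Lfun_rescaled:
  fixes d1 d2 \<alpha> a b :: real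
  assumes "d1 > 0" and "d2 > 0" and "\<alpha> > 0" and "a > 0" and "b > 0"
  shows "Lfun d1 d2 \<alpha> (b\<^sup>2 / d1) (a\<^sup>2 / d2)
       = a * (b * (a + b))\<^sup>2 * (9 * b\<^sup>2 - 29 * a * b - 8 * a\<^sup>2)
         / (9 * \<alpha>\<^sup>2 * d1\<^sup>2 * (a * d1 + b * d2))"
proof -
  let ?\<beta> = "b\<^sup>2 / d1" and ?\<mu> = "a\<^sup>2 / d2"
  have "?\<mu> * ?\<beta> / (d1 * d2) = (a * b / (d1 * d2))\<^sup>2" "d1 * d2 * ?\<mu> * ?\<beta> = (a * b)\<^sup>2"
    using assms by (simp_all add: field_simps power2_eq_square)
  then have k: "kc2 d1 d2 \<alpha> ?\<beta> ?\<mu> = a * b / (d1 * d2)"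
    and sqrt_prod: "sqrt (d1 * d2 * ?\<mu> * ?\<beta>) = a * b"
    unfolding kc2_def using assms by simp_all
  \<comment> \<open>Keeping \<open>a + b\<close> and \<open>a d1 + b d2\<close> opaque stops \<open>field_simps\<close> from
    multiplying out sums that it could then no longer cancel.\<close>
  define s where "s = a + b"
  have s_pos: "s > 0" unfolding s_def using assms by simp
  have chi: "chic d1 d2 \<alpha> ?\<beta> ?\<mu> = 4 * s\<^sup>2 / \<alpha>"
    unfolding chic_def sqrt_prod uc_def s_def using assms by (simp add: field_simps power2_eq_square)
  have M: "Mc d1 d2 \<alpha> ?\<beta> ?\<mu> = b * s / (\<alpha> * d1)"
    unfolding Mc_def k s_def using assms by (simp add: field_simps power2_eq_square)
  have Ms: "Mstar d1 d2 \<alpha> ?\<beta> ?\<mu> = \<alpha> * d2 / (a * s)"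
    unfolding Mstar_def k s_def using assms by (simp add: field_simps power2_eq_square)
  have denom: "\<alpha> * chic d1 d2 \<alpha> ?\<beta> ?\<mu> * kc2 d1 d2 \<alpha> ?\<beta> ?\<mu>
       - (?\<mu> + 4 * kc2 d1 d2 \<alpha> ?\<beta> ?\<mu> * d1) * (?\<beta> + 4 * kc2 d1 d2 \<alpha> ?\<beta> ?\<mu> * d2)
       = - 9 * (a * b)\<^sup>2 / (d1 * d2)"
    unfolding chi k s_def using assms by (simp add: field_simps power2_eq_square)
  have G: "Gfun d1 d2 \<alpha> ?\<beta> ?\<mu> = a * b\<^sup>2 * s ^ 3 * (9 * b * s - 38 * a * b - 8 * a\<^sup>2)
      / (9 * \<alpha> ^ 3 * d1 ^ 3 * d2)"
    unfolding Gfun_def Let_def denom unfolding chi k M using assms s_pos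
    by (simp add: field_simps power2_eq_square power3_eq_cube)
  define e where "e = a * d1 + b * d2"
  have e_pos: "e > 0" unfolding e_def using assms by (simp add: add_pos_pos)
  have Mstar_ratio: "Mstar d1 d2 \<alpha> ?\<beta> ?\<mu> / (1 + Mc d1 d2 \<alpha> ?\<beta> ?\<mu> * Mstar d1 d2 \<alpha> ?\<beta> ?\<mu>)
      = \<alpha> * d1 * d2 / (s * e)"
    unfolding M Ms e_def using assms s_pos by (simp add: field_simps)
  have "Lfun d1 d2 \<alpha> ?\<beta> ?\<mu> = a * (b * s)\<^sup>2 * (9 * b * s - 38 * a * b - 8 * a\<^sup>2)
         / (9 * \<alpha>\<^sup>2 * d1\<^sup>2 * e)"
    unfolding Lfun_def times_divide_eq_right[symmetric] G Mstar_ratio using assms s_pos e_pos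
    by (simp add: field_simps power2_eq_square power3_eq_cube)
  then show ?thesis unfolding s_def e_def by (simp add: algebra_simps power2_eq_square)
qed

lemma Lfun_sgn:
  fixes d1 d2 \<alpha> \<beta> \<mu> a b :: real
  assumes "d1 > 0" and "d2 > 0" and "\<alpha> > 0" and "a > 0" and "b > 0"
    and "a\<^sup>2 = \<mu> * d2" and "b\<^sup>2 = \<beta> * d1"
  shows "sgn (Lfun d1 d2 \<alpha> \<beta> \<mu>) = sgn (9 * b\<^sup>2 - 29 * a * b - 8 * a\<^sup>2)"
proof -
  have \<beta>: "\<beta> = b\<^sup>2 / d1" and \<mu>: "\<mu> = a\<^sup>2 / d2" using assms by simp_all
  have "Lfun d1 d2 \<alpha> \<beta> \<mu> = a * (b * (a + b))\<^sup>2 * (9 * b\<^sup>2 - 29 * a * b - 8 * a\<^sup>2)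
      / (9 * \<alpha>\<^sup>2 * d1\<^sup>2 * (a * d1 + b * d2))"
    unfolding \<beta> \<mu> using assms(1-5) by (rule Lfun_rescaled)
  then show ?thesis using assms by (simp add: sgn_mult add_pos_pos)
qed

lemma Lfun_pos_if_small_mu:
  fixes d1 d2 \<alpha> \<beta> \<mu> :: real
  assumes "d1 > 0" and "d2 > 0" and "\<alpha> > 0" and "\<beta> > 0" and "\<mu> > 0"
    and "16 * (\<mu> * d2) < \<beta> * d1"
  shows "Lfun d1 d2 \<alpha> \<beta> \<mu> > 0"
proof -
  define a b where "a = sqrt (\<mu> * d2)" and "b = sqrt (\<beta> * d1)"
  have ab: "a > 0" "b > 0" and sq: "a\<^sup>2 = \<mu> * d2" "b\<^sup>2 = \<beta> * d1"
    unfolding a_def b_def using assms by simp_all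
  have "16 * a\<^sup>2 < b\<^sup>2" unfolding sq using assms by simp
  then have "9 * b\<^sup>2 - 29 * a * b - 8 * a\<^sup>2 > 0" using ab by (intro quadratic_pos_if_small_ratio) simp_all
  moreover have "sgn (Lfun d1 d2 \<alpha> \<beta> \<mu>) = sgn (9 * b\<^sup>2 - 29 * a * b - 8 * a\<^sup>2)"
    using assms(1-3) ab sq by (rule Lfun_sgn)
  ultimately show ?thesis by (metis sgn_greater)
qed

lemma Lfun_neg_if_large_mu:
  fixes d1 d2 \<alpha> \<beta> \<mu> :: real
  assumes "d1 > 0" and "d2 > 0" and "\<alpha> > 0" and "\<beta> > 0" and "\<mu> > 0"
    and "\<beta> * d1 \<le> \<mu> * d2"
  shows "Lfun d1 d2 \<alpha> \<beta> \<mu> < 0"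
proof -
  define a b where "a = sqrt (\<mu> * d2)" and "b = sqrt (\<beta> * d1)"
  have ab: "a > 0" "b > 0" and sq: "a\<^sup>2 = \<mu> * d2" "b\<^sup>2 = \<beta> * d1"
    unfolding a_def b_def using assms by simp_all
  have "b\<^sup>2 \<le> a\<^sup>2" unfolding sq using assms by simp
  then have "9 * b\<^sup>2 - 29 * a * b - 8 * a\<^sup>2 < 0" using ab by (intro quadratic_neg_if_large_ratio) simp_all
  moreover have "sgn (Lfun d1 d2 \<alpha> \<beta> \<mu>) = sgn (9 * b\<^sup>2 - 29 * a * b - 8 * a\<^sup>2)"
    using assms(1-3) ab sq by (rule Lfun_sgn)
  ultimately show ?thesis by (metis sgn_less)
qed

theorem mainTheorem2:
  fixes d1 d2 \<alpha> \<beta> :: real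
  assumes "d1 > 0" and "d2 > 0" and "\<alpha> > 0" and "\<beta> > 0"
  shows "(\<forall>\<^sub>F \<mu> in at_right 0. supercritical (Lfun d1 d2 \<alpha> \<beta> \<mu>))
       \<and> (\<forall>\<^sub>F \<mu> in at_top. subcritical (Lfun d1 d2 \<alpha> \<beta> \<mu>))"
proof
  show "\<forall>\<^sub>F \<mu> in at_right 0. supercritical (Lfun d1 d2 \<alpha> \<beta> \<mu>)"
  proof (rule eventually_at_rightI)
    fix \<mu> assume "\<mu> \<in> {0<..<\<beta> * d1 / (16 * d2)}"
    then have "\<mu> > 0" and "16 * (\<mu> * d2) < \<beta> * d1" using assms by (auto simp: field_simps)
    then show "supercritical (Lfun d1 d2 \<alpha> \<beta> \<mu>)"
      unfolding supercritical_def using Lfun_pos_if_small_mu assms by blast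
  qed (use assms in simp)
  have "\<forall>\<^sub>F \<mu> in at_top. \<beta> * d1 / d2 \<le> \<mu> \<and> 0 < \<mu>"
    by (intro eventually_conj eventually_ge_at_top eventually_gt_at_top)
  then show "\<forall>\<^sub>F \<mu> in at_top. subcritical (Lfun d1 d2 \<alpha> \<beta> \<mu>)"
  proof (rule eventually_mono)
    fix \<mu> assume "\<beta> * d1 / d2 \<le> \<mu> \<and> 0 < \<mu>"
    then have "\<beta> * d1 \<le> \<mu> * d2" and "\<mu> > 0" using assms by (auto simp: field_simps)
    then show "subcritical (Lfun d1 d2 \<alpha> \<beta> \<mu>)"
      unfolding subcritical_def using Lfun_neg_if_large_mu assms by blast
  qed
qed

end
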